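(* Let $(G,\mathcal J)$ be a generalized Kähler structure on a Courant algebroid $E$ and $D$ a Levi-Civita connection of $G$. For $u\in E$ let $A_u$ be the endomorphism $v\mapsto (D_v\mathcal J)u$ of $E$ and $A_u^{\mathrm{sym}}$ its $\langle\cdot,\cdot\rangle$-symmetric part. Then the generalized connection $$\tilde D_uv=D_uv-\tfrac12\mathcal J(D_u\mathcal J)v-\tfrac14\{A_u^{\mathrm{sym}},\mathcal J\}v$$ (where $\{X,Y\}=XY+YX$) is a torsion-free generalized connection satisfying $\tilde DG=0$ and $\tilde D\mathcal J=0$.
   Context: A Courant algebroid on a manifold $M$ is a real vector bundle $E\to M$ with a nondegenerate symmetric bilinear form $\langle\cdot,\cdot\rangle$, an $\mathbb R$-bilinear bracket $[\cdot,\cdot]$ on $\Gamma(E)$ and a bundle map $\pi:E\to TM$ such that for all $u,v,w\in\Gamma(E)$, $f\in C^\infty(M)$: $[u,[v,w]]=[[u,v],w]+[v,[u,w]]$; $\pi([u,v])=[\pi(u),\pi(v)]$; $[u,fv]=\pi(u)(f)v+f[u,v]$; $\pi(u)\langle v,w\rangle=\langle[u,v],w\rangle+\langle v,[u,w]\rangle$; $2\langle[u,u],v\rangle=\pi(v)\langle u,u\rangle$. A generalized connection is an $\mathbb R$-linear $D:\Gamma(E)\to\Gamma(E^*\otimes E)$ with $D_u(fv)=\pi(u)(f)v+fD_uv$ and $\pi(u)\langle v,w\rangle=\langle D_uv,w\rangle+\langle v,D_uw\rangle$; its torsion is $T^D(u,v)=D_uv-D_vu-[u,v]+(Du)^*v$,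 with $(Du)^*$ the $\langle\cdot,\cdot\rangle$-adjoint of $w\mapsto D_wu$. A generalized metric is a subbundle $E_+$ on which $\langle\cdot,\cdot\rangle$ is nondegenerate; with $E_-=E_+^\perp$ it gives $G=\langle\cdot,\cdot\rangle|_{E_+}-\langle\cdot,\cdot\rangle|_{E_-}$ and $G^{\mathrm{end}}=\pm\mathrm{Id}$ on $E_\pm$. A Levi-Civita connection of $G$ is a torsion-free generalized connection with $DG=0$. A generalized almost complex structure is a $\langle\cdot,\cdot\rangle$-orthogonal $\mathcal J$ with $\mathcal J^2=-\mathrm{Id}$, integrable if $N_{\mathcal J}(u,v)=[\mathcal Ju,\mathcal Jv]-[u,v]-\mathcal J([\mathcal Ju,v]+[u,\mathcal Jv])=0$. $(G,\mathcal J)$ is generalized almost Hermitian if $G(\mathcal Ju,\mathcal Jv)=G(u,v)$, and generalized Kähler if moreover $\mathcal J$ and $G^{\mathrm{end}}\mathcal J$ are integrable. *)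

theory Defs
  imports Complex_Main
begin

text \<open>Algebraic (sections-level) model of a Courant algebroid.
  'f plays the role of C^infinity(M) (a commutative real algebra),
  'e the role of Gamma(E) (a real vector space with a C^infinity(M)-action sm).
  anc u is the vector field pi(u), acting as a derivation on functions.
  ip is the pairing, br the Courant (Dorfman) bracket.\<close>

definition module_action :: "('f::{comm_ring_1,real_algebra_1} \<Rightarrow> 'e::real_vector \<Rightarrow> 'e) \<Rightarrow> bool" where
  "module_action sm \<longleftrightarrow>
     (\<forall>f g u. sm (f * g) u = sm f (sm g u)) \<and>
     (\<forall>u. sm 1 u = u) \<and>
     (\<forall>f g u. sm (f + g) u = sm f u + sm g u) \<and>
     (\<forall>f u v. sm f (u + v) = sm f u + sm f v) \<and>
     (\<forall>c u. sm (of_real c) u = c *\<^sub>R u)"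

text \<open>C^infinity(M)-linear endomorphisms of sections (= bundle endomorphisms).\<close>
definition f_linear :: "('f::{comm_ring_1,real_algebra_1} \<Rightarrow> 'e::real_vector \<Rightarrow> 'e) \<Rightarrow> ('e \<Rightarrow> 'e) \<Rightarrow> bool" where
  "f_linear sm T \<longleftrightarrow> (\<forall>u v. T (u + v) = T u + T v) \<and> (\<forall>f u. T (sm f u) = sm f (T u))"

text \<open>C^infinity(M)-linear functionals on sections (= sections of E^*).\<close>
definition f_linear_functional :: "('f::{comm_ring_1,real_algebra_1} \<Rightarrow> 'e::real_vector \<Rightarrow> 'e) \<Rightarrow> ('e \<Rightarrow> 'f) \<Rightarrow> bool" where
  "f_linear_functional sm phi \<longleftrightarrow> (\<forall>u v. phi (u + v) = phi u + phi v) \<and> (\<forall>f u. phi (sm f u) = f * phi u)"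

definition derivation :: "('f::{comm_ring_1,real_algebra_1} \<Rightarrow> 'f) \<Rightarrow> bool" where
  "derivation X \<longleftrightarrow> (\<forall>f g. X (f + g) = X f + X g) \<and> (\<forall>c f. X (c *\<^sub>R f) = c *\<^sub>R X f) \<and>
     (\<forall>f g. X (f * g) = f * X g + g * X f)"

definition courant_algebroid ::
  "('f::{comm_ring_1,real_algebra_1} \<Rightarrow> 'e::real_vector \<Rightarrow> 'e) \<Rightarrow> ('e \<Rightarrow> 'e \<Rightarrow> 'f) \<Rightarrow> ('e \<Rightarrow> 'e \<Rightarrow> 'e) \<Rightarrow> ('e \<Rightarrow> 'f \<Rightarrow> 'f) \<Rightarrow> bool" where
  "courant_algebroid sm ip br anc \<longleftrightarrow>
     module_action sm \<and>
     \<comment> \<open>symmetric C-infinity-bilinear pairing\<close>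
     (\<forall>u v. ip u v = ip v u) \<and>
     (\<forall>v. f_linear_functional sm (\<lambda>w. ip v w)) \<and>
     \<comment> \<open>nondegeneracy: the pairing induces an isomorphism Gamma(E) = Gamma(E^*)\<close>
     (\<forall>phi. f_linear_functional sm phi \<longrightarrow> (\<exists>!v. \<forall>w. phi w = ip v w)) \<and>
     \<comment> \<open>R-bilinear bracket\<close>
     (\<forall>u v w. br (u + v) w = br u w + br v w) \<and>
     (\<forall>u v w. br u (v + w) = br u v + br u w) \<and>
     (\<forall>c u v. br (c *\<^sub>R u) v = c *\<^sub>R br u v) \<and>
     (\<forall>c u v. br u (c *\<^sub>R v) = c *\<^sub>R br u v) \<and>
     \<comment> \<open>anchor: bundle map to TM\<close>
     (\<forall>u. derivation (anc u)) \<and>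
     (\<forall>u v h. anc (u + v) h = anc u h + anc v h) \<and>
     (\<forall>f u h. anc (sm f u) h = f * anc u h) \<and>
     \<comment> \<open>Courant algebroid axioms\<close>
     (\<forall>u v w. br u (br v w) = br (br u v) w + br v (br u w)) \<and>
     (\<forall>u v h. anc (br u v) h = anc u (anc v h) - anc v (anc u h)) \<and>
     (\<forall>u v f. br u (sm f v) = sm (anc u f) v + sm f (br u v)) \<and>
     (\<forall>u v w. anc u (ip v w) = ip (br u v) w + ip v (br u w)) \<and>
     (\<forall>u v. 2 * ip (br u u) v = anc v (ip u u))"

definition adj :: "('e \<Rightarrow> 'e \<Rightarrow> 'f) \<Rightarrow> ('e \<Rightarrow> 'e) \<Rightarrow> 'e \<Rightarrow> 'e" where
  "adj ip T v = (THE w. \<forall>x. ip w x = ip v (T x))"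

text \<open>Generalized connection: D u v = D_u v; E^*\<otimes>E-valued, i.e. C-infinity-linear in u.\<close>
definition gen_connection ::
  "('f::{comm_ring_1,real_algebra_1} \<Rightarrow> 'e::real_vector \<Rightarrow> 'e) \<Rightarrow> ('e \<Rightarrow> 'e \<Rightarrow> 'f) \<Rightarrow> ('e \<Rightarrow> 'f \<Rightarrow> 'f) \<Rightarrow> ('e \<Rightarrow> 'e \<Rightarrow> 'e) \<Rightarrow> bool" where
  "gen_connection sm ip anc D \<longleftrightarrow>
     (\<forall>u v w. D u (v + w) = D u v + D u w) \<and>
     (\<forall>c u v. D u (c *\<^sub>R v) = c *\<^sub>R D u v) \<and>
     (\<forall>u. f_linear sm (\<lambda>x. D x u)) \<and>
     (\<forall>u f v. D u (sm f v) = sm (anc u f) v + sm f (D u v)) \<and>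
     (\<forall>u v w. anc u (ip v w) = ip (D u v) w + ip v (D u w))"

definition torsion :: "('e \<Rightarrow> 'e \<Rightarrow> 'f) \<Rightarrow> ('e \<Rightarrow> 'e \<Rightarrow> 'e) \<Rightarrow> ('e::real_vector \<Rightarrow> 'e \<Rightarrow> 'e) \<Rightarrow> 'e \<Rightarrow> 'e \<Rightarrow> 'e" where
  "torsion ip br D u v = D u v - D v u - br u v + adj ip (\<lambda>w. D w u) v"

definition torsion_free :: "('e \<Rightarrow> 'e \<Rightarrow> 'f) \<Rightarrow> ('e \<Rightarrow> 'e \<Rightarrow> 'e) \<Rightarrow> ('e::real_vector \<Rightarrow> 'e \<Rightarrow> 'e) \<Rightarrow> bool" where
  "torsion_free ip br D \<longleftrightarrow> (\<forall>u v. torsion ip br D u v = 0)"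

text \<open>Generalized metric, encoded by G^end (= +Id on E_+, -Id on E_- = E_+^perp).\<close>
definition gen_metric ::
  "('f::{comm_ring_1,real_algebra_1} \<Rightarrow> 'e::real_vector \<Rightarrow> 'e) \<Rightarrow> ('e \<Rightarrow> 'e \<Rightarrow> 'f) \<Rightarrow> ('e \<Rightarrow> 'e) \<Rightarrow> bool" where
  "gen_metric sm ip Gend \<longleftrightarrow> f_linear sm Gend \<and> (\<forall>u. Gend (Gend u) = u) \<and>
     (\<forall>u v. ip (Gend u) v = ip u (Gend v))"

text \<open>G(u,v) = <u,v>|E_+ - <u,v>|E_- = <G^end u, v>.\<close>
definition Gmet :: "('e \<Rightarrow> 'e \<Rightarrow> 'f) \<Rightarrow> ('e \<Rightarrow> 'e) \<Rightarrow> 'e \<Rightarrow> 'e \<Rightarrow> 'f" where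
  "Gmet ip Gend u v = ip (Gend u) v"

definition parallel_metric ::
  "('e \<Rightarrow> 'e \<Rightarrow> 'f::{comm_ring_1,real_algebra_1}) \<Rightarrow> ('e \<Rightarrow> 'f \<Rightarrow> 'f) \<Rightarrow> ('e \<Rightarrow> 'e) \<Rightarrow> ('e \<Rightarrow> 'e \<Rightarrow> 'e) \<Rightarrow> bool" where
  "parallel_metric ip anc Gend D \<longleftrightarrow>
     (\<forall>u v w. anc u (Gmet ip Gend v w) = Gmet ip Gend (D u v) w + Gmet ip Gend v (D u w))"

definition covD_end :: "('e \<Rightarrow> 'e \<Rightarrow> 'e::real_vector) \<Rightarrow> ('e \<Rightarrow> 'e) \<Rightarrow> 'e \<Rightarrow> 'e \<Rightarrow> 'e" where
  "covD_end D J u v = D u (J v) - J (D u v)"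

definition parallel_end :: "('e \<Rightarrow> 'e \<Rightarrow> 'e::real_vector) \<Rightarrow> ('e \<Rightarrow> 'e) \<Rightarrow> bool" where
  "parallel_end D J \<longleftrightarrow> (\<forall>u v. covD_end D J u v = 0)"

definition levi_civita ::
  "('f::{comm_ring_1,real_algebra_1} \<Rightarrow> 'e::real_vector \<Rightarrow> 'e) \<Rightarrow> ('e \<Rightarrow> 'e \<Rightarrow> 'f) \<Rightarrow> ('e \<Rightarrow> 'e \<Rightarrow> 'e) \<Rightarrow> ('e \<Rightarrow> 'f \<Rightarrow> 'f) \<Rightarrow> ('e \<Rightarrow> 'e) \<Rightarrow> ('e \<Rightarrow> 'e \<Rightarrow> 'e) \<Rightarrow> bool" where
  "levi_civita sm ip br anc Gend D \<longleftrightarrow>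
     gen_connection sm ip anc D \<and> torsion_free ip br D \<and> parallel_metric ip anc Gend D"

definition gen_almost_complex ::
  "('f::{comm_ring_1,real_algebra_1} \<Rightarrow> 'e::real_vector \<Rightarrow> 'e) \<Rightarrow> ('e \<Rightarrow> 'e \<Rightarrow> 'f) \<Rightarrow> ('e \<Rightarrow> 'e) \<Rightarrow> bool" where
  "gen_almost_complex sm ip J \<longleftrightarrow> f_linear sm J \<and> (\<forall>u v. ip (J u) (J v) = ip u v) \<and>
     (\<forall>u. J (J u) = - u)"

definition nijenhuis :: "('e \<Rightarrow> 'e \<Rightarrow> 'e::real_vector) \<Rightarrow> ('e \<Rightarrow> 'e) \<Rightarrow> 'e \<Rightarrow> 'e \<Rightarrow> 'e" where
  "nijenhuis br J u v = br (J u) (J v) - br u v - J (br (J u) v + br u (J v))"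

definition integrable :: "('e \<Rightarrow> 'e \<Rightarrow> 'e::real_vector) \<Rightarrow> ('e \<Rightarrow> 'e) \<Rightarrow> bool" where
  "integrable br J \<longleftrightarrow> (\<forall>u v. nijenhuis br J u v = 0)"

definition gen_almost_hermitian ::
  "('f::{comm_ring_1,real_algebra_1} \<Rightarrow> 'e::real_vector \<Rightarrow> 'e) \<Rightarrow> ('e \<Rightarrow> 'e \<Rightarrow> 'f) \<Rightarrow> ('e \<Rightarrow> 'e) \<Rightarrow> ('e \<Rightarrow> 'e) \<Rightarrow> bool" where
  "gen_almost_hermitian sm ip Gend J \<longleftrightarrow> gen_metric sm ip Gend \<and> gen_almost_complex sm ip J \<and>
     (\<forall>u v. Gmet ip Gend (J u) (J v) = Gmet ip Gend u v)"

definition gen_kaehler ::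
  "('f::{comm_ring_1,real_algebra_1} \<Rightarrow> 'e::real_vector \<Rightarrow> 'e) \<Rightarrow> ('e \<Rightarrow> 'e \<Rightarrow> 'f) \<Rightarrow> ('e \<Rightarrow> 'e \<Rightarrow> 'e) \<Rightarrow> ('e \<Rightarrow> 'e) \<Rightarrow> ('e \<Rightarrow> 'e) \<Rightarrow> bool" where
  "gen_kaehler sm ip br Gend J \<longleftrightarrow> gen_almost_hermitian sm ip Gend J \<and>
     integrable br J \<and> integrable br (Gend \<circ> J)"

definition A_end :: "('e \<Rightarrow> 'e \<Rightarrow> 'e::real_vector) \<Rightarrow> ('e \<Rightarrow> 'e) \<Rightarrow> 'e \<Rightarrow> 'e \<Rightarrow> 'e" where
  "A_end D J u v = covD_end D J v u"

definition A_sym :: "('e \<Rightarrow> 'e \<Rightarrow> 'f) \<Rightarrow> ('e \<Rightarrow> 'e \<Rightarrow> 'e::real_vector) \<Rightarrow> ('e \<Rightarrow> 'e) \<Rightarrow> 'e \<Rightarrow> 'e \<Rightarrow> 'e" where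
  "A_sym ip D J u v = (1/2) *\<^sub>R (A_end D J u v + adj ip (A_end D J u) v)"

definition D_tilde :: "('e \<Rightarrow> 'e \<Rightarrow> 'f) \<Rightarrow> ('e \<Rightarrow> 'e \<Rightarrow> 'e::real_vector) \<Rightarrow> ('e \<Rightarrow> 'e) \<Rightarrow> 'e \<Rightarrow> 'e \<Rightarrow> 'e" where
  "D_tilde ip D J u v = D u v - (1/2) *\<^sub>R J (covD_end D J u v)
     - (1/4) *\<^sub>R (A_sym ip D J u (J v) + J (A_sym ip D J u v))"

end

theory Submission
  imports Defs
begin

text \<open>
  Write \<open>D_tilde = D + C\<close>. Every \<open>C u\<close> is skew for the pairing, so \<open>D_tilde\<close> is again a
  generalized connection; and \<open>D_tilde J = 0\<close> because the commutator of \<open>- J (D_u J) / 2\<close>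
  with \<open>J\<close> is \<open>- D_u J\<close>, while an anticommutator \<open>{A, J}\<close> always commutes with \<open>J\<close>.

  Since \<open>D\<close> is torsion-free, brackets can be expressed through \<open>D\<close>, and the pairing of the
  Nijenhuis tensor of an orthogonal complex structure \<open>K\<close> becomes a six-term expression
  in \<open>D K\<close>. As \<open>D G = 0\<close>, one has \<open>D (G J) = G (D J)\<close>, and the expressions for \<open>J\<close> and
  \<open>G J\<close> differ only in the terms in which \<open>J\<close> is differentiated along \<open>J u\<close> resp.
  \<open>G J u\<close>. Integrability of both therefore forces \<open>D_(G x) J = G (D_x J)\<close>, which makes
  \<open>C\<close> commute with \<open>G\<close> and yields \<open>D_tilde G = 0\<close>. Finally the pairing of the torsion
  of \<open>D_tilde\<close> with \<open>w\<close> is \<open>\<langle>C_u v, w\<rangle> - \<langle>C_v u, w\<rangle> + \<langle>C_w u, v\<rangle>\<close>, which is a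
  quarter of \<open>\<langle>N_J(u, v), w\<rangle>\<close> and hence vanishes.
\<close>

locale section_module =
  fixes sm :: "'f::{comm_ring_1,real_algebra_1} \<Rightarrow> 'e::real_vector \<Rightarrow> 'e"
  assumes module_action: "module_action sm"
begin

lemma sm_mult: "sm (f * g) u = sm f (sm g u)"
  and sm_add: "sm f (u + v) = sm f u + sm f v"
  and sm_of_real: "sm (of_real c) u = c *\<^sub>R u"
  using module_action unfolding module_action_def by blast+

lemma sm_zero: "sm f 0 = 0"
  using sm_add[of f 0 0] by simp

lemma sm_minus: "sm f (- u) = - sm f u"
  using sm_add[of f u "- u"] by (simp add: sm_zero add_eq_0_iff2)

lemma sm_diff: "sm f (u - v) = sm f u - sm f v"
  using sm_add[of f u "- v"] by (simp add: sm_minus)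

lemma sm_scaleR: "sm f (c *\<^sub>R u) = c *\<^sub>R sm f u"
  by (metis mult.commute sm_mult sm_of_real)

lemma f_linear_add: "f_linear sm T \<Longrightarrow> T (u + v) = T u + T v"
  and f_linear_sm: "f_linear sm T \<Longrightarrow> T (sm f u) = sm f (T u)"
  unfolding f_linear_def by blast+

lemma f_linear_zero: "f_linear sm T \<Longrightarrow> T 0 = 0"
  using f_linear_add[of T 0 0] by simp

lemma f_linear_minus: "f_linear sm T \<Longrightarrow> T (- u) = - T u"
  using f_linear_add[of T u "- u"] by (simp add: f_linear_zero add_eq_0_iff2)

lemma f_linear_diff: "f_linear sm T \<Longrightarrow> T (u - v) = T u - T v"
  using f_linear_add[of T u "- v"] by (simp add: f_linear_minus)

lemma f_linear_scaleR: "f_linear sm T \<Longrightarrow> T (c *\<^sub>R u) = c *\<^sub>R T u"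
  using f_linear_sm[of T "of_real c" u] by (simp add: sm_of_real)

lemmas f_linear_simps = f_linear_add f_linear_minus f_linear_diff f_linear_scaleR f_linear_zero

lemma f_linear_compose: "f_linear sm T \<Longrightarrow> f_linear sm T' \<Longrightarrow> f_linear sm (\<lambda>x. T (T' x))"
  unfolding f_linear_def by simp

lemma f_linear_compose_add:
  "f_linear sm T \<Longrightarrow> f_linear sm T' \<Longrightarrow> f_linear sm (\<lambda>x. T x + T' x)"
  unfolding f_linear_def by (simp add: sm_add algebra_simps)

end

locale courant =
  fixes sm :: "'f::{comm_ring_1,real_algebra_1} \<Rightarrow> 'e::real_vector \<Rightarrow> 'e"
    and ip :: "'e \<Rightarrow> 'e \<Rightarrow> 'f" and br :: "'e \<Rightarrow> 'e \<Rightarrow> 'e" and anc :: "'e \<Rightarrow> 'f \<Rightarrow> 'f"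
  assumes courant_algebroid: "courant_algebroid sm ip br anc"

sublocale courant \<subseteq> section_module sm
  using courant_algebroid unfolding courant_algebroid_def by unfold_locales blast

context courant
begin

lemma ip_sym: "ip u v = ip v u"
  and ip_f_linear: "f_linear_functional sm (ip v)"
  and anc_derivation: "derivation (anc u)"
  using courant_algebroid unfolding courant_algebroid_def by simp_all

lemma ip_nondegenerate: "f_linear_functional sm phi \<Longrightarrow> \<exists>!v. \<forall>w. phi w = ip v w"
  using courant_algebroid unfolding courant_algebroid_def by simp

lemma ip_add_right: "ip v (u + w) = ip v u + ip v w"
  and ip_sm_right: "ip v (sm f u) = f * ip v u"
  using ip_f_linear unfolding f_linear_functional_def by blast+

lemma ip_add_left: "ip (u + w) v = ip u v + ip w v"
  by (metis ip_sym ip_add_right)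

lemma ip_sm_left: "ip (sm f u) v = f * ip u v"
  by (metis ip_sym ip_sm_right)

lemma ip_scaleR_right: "ip v (c *\<^sub>R u) = c *\<^sub>R ip v u"
  by (metis ip_sm_right sm_of_real scaleR_conv_of_real)

lemma ip_scaleR_left: "ip (c *\<^sub>R u) v = c *\<^sub>R ip u v"
  by (metis ip_sym ip_scaleR_right)

lemma ip_zero_right: "ip v 0 = 0"
  using ip_add_right[of v 0 0] by simp

lemma ip_zero_left: "ip 0 v = 0"
  by (metis ip_sym ip_zero_right)

lemma ip_minus_right: "ip v (- u) = - ip v u"
  using ip_add_right[of v u "- u"] by (simp add: ip_zero_right add_eq_0_iff2)

lemma ip_minus_left: "ip (- u) v = - ip u v"
  by (metis ip_sym ip_minus_right)

lemma ip_diff_right: "ip v (u - w) = ip v u - ip v w"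
  using ip_add_right[of v u "- w"] by (simp add: ip_minus_right)

lemma ip_diff_left: "ip (u - w) v = ip u v - ip w v"
  by (metis ip_sym ip_diff_right)

lemmas ip_simps = ip_add_right ip_add_left ip_scaleR_right ip_scaleR_left ip_zero_right
  ip_zero_left ip_minus_right ip_minus_left ip_diff_right ip_diff_left

lemma ip_ext: "(\<And>w. ip a w = ip b w) \<Longrightarrow> a = b"
  using ip_nondegenerate[OF ip_f_linear[of b]] by metis

lemma ip_adj: "f_linear sm T \<Longrightarrow> ip (adj ip T v) x = ip v (T x)"
proof -
  assume "f_linear sm T"
  then have "f_linear_functional sm (\<lambda>x. ip v (T x))"
    unfolding f_linear_functional_def f_linear_def by (simp add: ip_add_right ip_sm_right)
  then have "\<exists>!w. \<forall>x. ip w x = ip v (T x)"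
    using ip_nondegenerate by metis
  from theI'[OF this] show ?thesis
    unfolding adj_def by blast
qed

lemma f_linear_ipI:
  assumes "\<And>x y z. ip (T (x + y)) z = ip (T x) z + ip (T y) z"
    and "\<And>f x z. ip (T (sm f x)) z = f * ip (T x) z"
  shows "f_linear sm T"
  unfolding f_linear_def by (auto intro!: ip_ext simp: assms ip_add_left ip_sm_left)

lemma anc_minus: "anc u (- h) = - anc u h"
  using anc_derivation[of u] unfolding derivation_def by (metis scaleR_minus1_left)

lemma gen_almost_complex_skew:
  assumes "gen_almost_complex sm ip K"
  shows "ip (K a) b = - ip a (K b)"
proof -
  have "f_linear sm K" "\<And>u. K (K u) = - u" "\<And>u v. ip (K u) (K v) = ip u v"
    using assms unfolding gen_almost_complex_def by simp_all
  then have "ip (K a) b = ip (K a) (K (- K b))"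
    by (simp add: f_linear_minus)
  also have "\<dots> = - ip a (K b)"
    by (simp add: \<open>\<And>u v. ip (K u) (K v) = ip u v\<close> ip_minus_right)
  finally show ?thesis .
qed

end

locale courant_connection = courant +
  fixes D :: "'e::real_vector \<Rightarrow> 'e \<Rightarrow> 'e"
  assumes gen_connection: "gen_connection sm ip anc D"
begin

lemma D_add_right: "D u (v + w) = D u v + D u w"
  and D_scaleR_right: "D u (c *\<^sub>R v) = c *\<^sub>R D u v"
  and f_linear_D_left: "f_linear sm (\<lambda>x. D x v)"
  and D_sm_right: "D u (sm f v) = sm (anc u f) v + sm f (D u v)"
  and anc_ip: "anc u (ip v w) = ip (D u v) w + ip v (D u w)"
  using gen_connection unfolding gen_connection_def by simp_all

lemma D_minus_right: "D u (- v) = - D u v"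
  using D_scaleR_right[of u "- 1" v] by simp

lemma f_linear_covD_end_left: "f_linear sm K \<Longrightarrow> f_linear sm (\<lambda>x. covD_end D K x v)"
  using f_linear_D_left[of v] f_linear_D_left[of "K v"]
  unfolding f_linear_def covD_end_def by (simp add: sm_diff)

lemma f_linear_covD_end_right: "f_linear sm K \<Longrightarrow> f_linear sm (covD_end D K u)"
  unfolding f_linear_def covD_end_def
  by (simp add: D_add_right D_sm_right sm_add sm_diff)

lemma covD_end_anticommute:
  assumes "f_linear sm K" and "\<And>v. K (K v) = - v"
  shows "covD_end D K u (K v) = - K (covD_end D K u v)"
  unfolding covD_end_def using assms by (simp add: D_minus_right f_linear_simps)

lemma ip_covD_end_skew:
  assumes "\<And>a b. ip (K a) b = - ip a (K b)"
  shows "ip (covD_end D K u v) w = - ip v (covD_end D K u w)"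
proof -
  have "ip (D u (K v)) w + ip (K v) (D u w) = anc u (ip (K v) w)"
    by (simp add: anc_ip)
  also have "\<dots> = - (ip (D u v) (K w) + ip v (D u (K w)))"
    by (simp add: assms anc_minus anc_ip)
  finally show ?thesis
    unfolding covD_end_def by (simp add: assms ip_simps algebra_simps)
qed

end

locale courant_torsion_free = courant_connection +
  assumes torsion_free: "torsion_free ip br D"
begin

lemma br_conv_D: "br u v = D u v - D v u + adj ip (\<lambda>w. D w u) v"
proof -
  have "D u v - D v u - br u v + adj ip (\<lambda>w. D w u) v = 0"
    using torsion_free unfolding torsion_free_def torsion_def by blast
  then show ?thesis
    by (simp add: algebra_simps)
qed

lemma ip_br: "ip (br u v) w = ip (D u v) w - ip (D v u) w + ip v (D w u)"
  by (simp add: br_conv_D ip_simps ip_adj[OF f_linear_D_left])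

lemma ip_nijenhuis:
  assumes "gen_almost_complex sm ip K"
  shows "ip (nijenhuis br K u v) w
    = ip (covD_end D K (K u) v) w - ip (covD_end D K (K v) u) w
      + ip (covD_end D K w u) (K v) - ip (covD_end D K v u) (K w)
      + ip (covD_end D K (K w) u) v + ip (covD_end D K u v) (K w)"
proof -
  have K: "f_linear sm K" "\<And>u. K (K u) = - u"
    using assms unfolding gen_almost_complex_def by simp_all
  have DK: "\<And>x y. D x (K y) = covD_end D K x y + K (D x y)"
    unfolding covD_end_def by simp
  show ?thesis
    unfolding nijenhuis_def
    by (simp add: ip_simps f_linear_add[OF K(1)] f_linear_diff[OF K(1)] f_linear_minus[OF K(1)]
        K(2) ip_br DK gen_almost_complex_skew[OF assms] algebra_simps
        ip_sym[of v "covD_end D K (K w) u"] ip_sym[of "covD_end D K w u" "K v"])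
qed

end

locale gk_levi_civita = courant sm ip br anc
  for sm :: "'f::{comm_ring_1,real_algebra_1} \<Rightarrow> 'e::real_vector \<Rightarrow> 'e"
    and ip :: "'e \<Rightarrow> 'e \<Rightarrow> 'f" and br :: "'e \<Rightarrow> 'e \<Rightarrow> 'e" and anc :: "'e \<Rightarrow> 'f \<Rightarrow> 'f" +
  fixes G J :: "'e \<Rightarrow> 'e" and D :: "'e \<Rightarrow> 'e \<Rightarrow> 'e"
  assumes gen_kaehler: "gen_kaehler sm ip br G J"
    and levi_civita: "levi_civita sm ip br anc G D"

sublocale gk_levi_civita \<subseteq> courant_torsion_free sm ip br anc D
  using levi_civita unfolding levi_civita_def by unfold_locales blast+

context gk_levi_civita
begin

lemma gen_almost_complex_J: "gen_almost_complex sm ip J"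
  and integrable_J: "integrable br J"
  and integrable_GJ: "integrable br (G \<circ> J)"
  and f_linear_G: "f_linear sm G"
  and G_G [simp]: "G (G u) = u"
  and ip_G: "ip (G u) v = ip u (G v)"
  and ip_G_J_J: "ip (G (J u)) (J v) = ip (G u) v"
  using gen_kaehler
  unfolding gen_kaehler_def gen_almost_hermitian_def gen_metric_def Gmet_def by blast+

lemma f_linear_J: "f_linear sm J"
  and J_J [simp]: "J (J u) = - u"
  and ip_J_J: "ip (J u) (J v) = ip u v"
  using gen_almost_complex_J unfolding gen_almost_complex_def by simp_all

lemmas ip_J = gen_almost_complex_skew[OF gen_almost_complex_J]
lemmas J_simps = f_linear_simps[OF f_linear_J]
lemmas G_simps = f_linear_simps[OF f_linear_G]

lemma ip_G_G: "ip (G u) (G v) = ip u v"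
  by (simp add: ip_G)

lemma G_J_commute: "G (J u) = J (G u)"
proof (rule ip_ext)
  fix w
  have "ip (G (J u)) w = ip (G (J u)) (J (- J w))"
    by (simp add: J_simps)
  also have "\<dots> = - ip (G u) (J w)"
    by (simp add: ip_G_J_J ip_minus_right)
  finally show "ip (G (J u)) w = ip (J (G u)) w"
    by (simp add: ip_J)
qed

lemma gen_almost_complex_GJ: "gen_almost_complex sm ip (G \<circ> J)"
  unfolding gen_almost_complex_def comp_def
  by (simp add: f_linear_compose f_linear_G f_linear_J ip_G ip_J_J G_J_commute G_simps)

lemma D_G_right: "D u (G v) = G (D u v)"
proof (rule ip_ext)
  fix w
  have "ip (D u (G v)) w + ip (G v) (D u w) = ip (G (D u v)) w + ip (G v) (D u w)"
    using levi_civita unfolding levi_civita_def parallel_metric_def Gmet_def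
    by (simp flip: anc_ip)
  then show "ip (D u (G v)) w = ip (G (D u v)) w"
    by simp
qed

abbreviation DJ :: "'e \<Rightarrow> 'e \<Rightarrow> 'e" where
  "DJ \<equiv> covD_end D J"

lemma f_linear_DJ_left: "f_linear sm (\<lambda>x. DJ x v)"
  and f_linear_DJ_right: "f_linear sm (DJ u)"
  by (simp_all add: f_linear_covD_end_left f_linear_covD_end_right f_linear_J)

lemma DJ_J_right: "DJ u (J v) = - J (DJ u v)"
  by (simp add: covD_end_anticommute f_linear_J)

lemma DJ_G_right: "DJ u (G v) = G (DJ u v)"
  unfolding covD_end_def by (simp add: G_J_commute[symmetric] D_G_right G_simps)

lemma ip_DJ_skew: "ip (DJ u v) w = - ip (DJ u w) v"
  by (metis ip_covD_end_skew ip_J ip_sym)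

lemma ip_DJ_J: "ip (DJ u (J v)) w = ip (DJ u v) (J w)"
  by (simp add: DJ_J_right ip_J ip_minus_left)

lemma integrable_J_DJ:
  "ip (DJ (J u) v) w = ip (DJ (J v) u) w - ip (DJ (J w) u) v
    + ip (DJ v u) (J w) - ip (DJ w u) (J v) - ip (DJ u v) (J w)"
proof -
  have "ip (nijenhuis br J u v) w = 0"
    using integrable_J unfolding integrable_def by (simp add: ip_zero_left)
  then show ?thesis
    unfolding ip_nijenhuis[OF gen_almost_complex_J] by (simp add: algebra_simps)
qed

lemma integrable_GJ_DJ:
  "ip (DJ (G (J u)) v) (G w) = ip (DJ (G (J v)) u) (G w) - ip (DJ (G (J w)) u) (G v)
    + ip (DJ v u) (J w) - ip (DJ w u) (J v) - ip (DJ u v) (J w)"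
proof -
  have DGJ: "covD_end D (G \<circ> J) x y = G (DJ x y)" for x y
    unfolding covD_end_def by (simp add: D_G_right G_simps)
  have "ip (nijenhuis br (G \<circ> J) u v) w = 0"
    using integrable_GJ unfolding integrable_def by (simp add: ip_zero_left)
  then show ?thesis
    unfolding ip_nijenhuis[OF gen_almost_complex_GJ] by (simp add: DGJ ip_G algebra_simps)
qed

lemma DJ_G_left: "DJ (G x) y = G (DJ x y)"
proof -
  define \<sigma> where "\<sigma> u v w = ip (DJ (J u) v) w - ip (DJ (G (J u)) v) (G w)" for u v w
  have cyclic: "\<sigma> u v w = \<sigma> v u w - \<sigma> w u v" for u v w
    unfolding \<sigma>_def integrable_J_DJ[of u v w] integrable_GJ_DJ[of u v w]
    by (simp add: algebra_simps)
  have twist_right: "\<sigma> u (G v) (G w) = \<sigma> u v w" for u v w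
    unfolding \<sigma>_def by (simp add: DJ_G_right ip_G_G ip_G)
  have twist_left: "\<sigma> (G v) u (G w) = - \<sigma> v u w" for u v w
    unfolding \<sigma>_def by (simp add: G_J_commute[symmetric] ip_G)
  have vanish: "\<sigma> u v w = 0" for u v w
  proof -
    have "\<sigma> u v w = - \<sigma> v u w + \<sigma> w u v"
      using cyclic[of u "G v" "G w"] by (simp add: twist_right twist_left)
    then have "\<sigma> u v w + \<sigma> u v w = 0"
      using cyclic[of u v w] by simp
    then show ?thesis
      by (metis scaleR_2 scaleR_eq_0_iff zero_neq_numeral)
  qed
  show ?thesis
  proof (rule ip_ext)
    fix w
    have "ip (DJ x y) (G w) = ip (DJ (G x) y) w"
      using vanish[of "- J x" y "G w"] unfolding \<sigma>_def by (simp add: J_simps)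
    then show "ip (DJ (G x) y) w = ip (G (DJ x y)) w"
      by (simp add: ip_G)
  qed
qed

lemma ip_A_sym: "ip (A_sym ip D J u v) w = (1/2) *\<^sub>R (ip (DJ v u) w + ip (DJ w u) v)"
proof -
  have "f_linear sm (A_end D J u)"
    unfolding A_end_def[abs_def] by (rule f_linear_DJ_left)
  then show ?thesis
    unfolding A_sym_def by (simp add: ip_simps ip_adj A_end_def ip_sym[of v])
qed

lemma A_sym_minus_right: "A_sym ip D J u (- v) = - A_sym ip D J u v"
  by (rule ip_ext) (simp add: ip_A_sym ip_simps f_linear_minus[OF f_linear_DJ_left] algebra_simps)

definition kaehler_correction :: "'e \<Rightarrow> 'e \<Rightarrow> 'e" where
  "kaehler_correction u v =
    - (1/2) *\<^sub>R J (DJ u v) - (1/4) *\<^sub>R (A_sym ip D J u (J v) + J (A_sym ip D J u v))"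

lemma D_tilde_eq: "D_tilde ip D J u v = D u v + kaehler_correction u v"
  unfolding D_tilde_def kaehler_correction_def by (simp add: algebra_simps)

lemma ip_kaehler_correction:
  "ip (kaehler_correction u v) w = (1/2) *\<^sub>R ip (DJ u v) (J w)
    - (1/8) *\<^sub>R (ip (DJ (J v) u) w + ip (DJ w u) (J v) - ip (DJ v u) (J w) - ip (DJ (J w) u) v)"
  unfolding kaehler_correction_def by (simp add: ip_simps ip_J ip_A_sym algebra_simps)

lemma f_linear_kaehler_correction_right: "f_linear sm (kaehler_correction u)"
  by (rule f_linear_ipI)
    (simp_all add: ip_kaehler_correction ip_simps ip_sm_left ip_sm_right J_simps
      f_linear_sm[OF f_linear_J] f_linear_simps[OF f_linear_DJ_right]
      f_linear_sm[OF f_linear_DJ_right] f_linear_simps[OF f_linear_DJ_left]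
      f_linear_sm[OF f_linear_DJ_left] mult_scaleR_right algebra_simps)

lemma f_linear_kaehler_correction_left: "f_linear sm (\<lambda>x. kaehler_correction x v)"
  by (rule f_linear_ipI)
    (simp_all add: ip_kaehler_correction ip_simps ip_sm_left ip_sm_right
      f_linear_simps[OF f_linear_DJ_right] f_linear_sm[OF f_linear_DJ_right]
      f_linear_simps[OF f_linear_DJ_left] f_linear_sm[OF f_linear_DJ_left]
      mult_scaleR_right algebra_simps)

lemma ip_kaehler_correction_skew:
  "ip (kaehler_correction u v) w = - ip (kaehler_correction u w) v"
proof -
  have "ip (DJ u w) (J v) = - ip (DJ u v) (J w)"
    using ip_DJ_skew[of u w "J v"] ip_DJ_J[of u v w] by simp
  then show ?thesis
    by (simp add: ip_kaehler_correction algebra_simps)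
qed

lemma ip_kaehler_correction_G:
  "ip (kaehler_correction u v) (G w) = ip (kaehler_correction u (G v)) w"
  by (simp add: ip_kaehler_correction DJ_G_left DJ_G_right G_J_commute[symmetric] ip_G)

lemma kaehler_correction_J_commutator:
  "kaehler_correction u (J v) - J (kaehler_correction u v) = - DJ u v"
  unfolding kaehler_correction_def
  by (simp add: J_simps DJ_J_right A_sym_minus_right algebra_simps)
    (simp flip: scaleR_left_distrib)

lemma gen_connection_D_tilde: "gen_connection sm ip anc (D_tilde ip D J)"
  unfolding gen_connection_def D_tilde_eq
proof (intro conjI allI)
  fix u v w :: 'e and c :: real and f :: 'f
  let ?C = kaehler_correction
  show "D u (v + w) + ?C u (v + w) = D u v + ?C u v + (D u w + ?C u w)"
    by (simp add: D_add_right f_linear_add[OF f_linear_kaehler_correction_right])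
  show "D u (c *\<^sub>R v) + ?C u (c *\<^sub>R v) = c *\<^sub>R (D u v + ?C u v)"
    by (simp add: D_scaleR_right f_linear_scaleR[OF f_linear_kaehler_correction_right]
        scaleR_add_right)
  show "f_linear sm (\<lambda>x. D x u + ?C x u)"
    by (rule f_linear_compose_add[OF f_linear_D_left f_linear_kaehler_correction_left])
  show "D u (sm f v) + ?C u (sm f v) = sm (anc u f) v + sm f (D u v + ?C u v)"
    by (simp add: D_sm_right f_linear_sm[OF f_linear_kaehler_correction_right] sm_add)
  have "ip (?C u v) w + ip v (?C u w) = 0"
    by (simp add: ip_kaehler_correction_skew[of u v w] ip_sym[of v])
  then show "anc u (ip v w) = ip (D u v + ?C u v) w + ip v (D u w + ?C u w)"
    by (simp add: anc_ip ip_simps algebra_simps)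
qed

lemma torsion_D_tilde: "torsion ip br (D_tilde ip D J) u v = 0"
proof (rule ip_ext)
  fix w
  let ?C = kaehler_correction
  have "f_linear sm (\<lambda>x. D_tilde ip D J x u)"
    unfolding D_tilde_eq
    by (rule f_linear_compose_add[OF f_linear_D_left f_linear_kaehler_correction_left])
  then have "ip (torsion ip br (D_tilde ip D J) u v) w
      = ip (?C u v) w - ip (?C v u) w + ip (?C w u) v"
    unfolding torsion_def by (simp add: ip_simps ip_adj ip_br D_tilde_eq ip_sym[of v])
  also have "\<dots> = (1/4) *\<^sub>R ip (nijenhuis br J u v) w"
  proof -
    have skew: "ip (DJ (J v) u) w = - ip (DJ (J v) w) u"
      "ip (DJ (J w) v) u = - ip (DJ (J w) u) v"
      "ip (DJ (J u) w) v = - ip (DJ (J u) v) w"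
      by (rule ip_DJ_skew)+
    have skew_J: "ip (DJ v u) (J w) = - ip (DJ v w) (J u)"
      "ip (DJ w v) (J u) = - ip (DJ w u) (J v)"
      "ip (DJ u w) (J v) = - ip (DJ u v) (J w)"
      by (metis ip_DJ_J ip_DJ_skew)+
    show ?thesis
      unfolding ip_nijenhuis[OF gen_almost_complex_J]
      by (simp add: ip_kaehler_correction skew skew_J algebra_simps
          flip: scaleR_left_diff_distrib scaleR_left_distrib)
  qed
  also have "\<dots> = 0"
    using integrable_J unfolding integrable_def by (simp add: ip_zero_left)
  finally show "ip (torsion ip br (D_tilde ip D J) u v) w = ip 0 w"
    by (simp add: ip_zero_left)
qed

lemma parallel_metric_D_tilde: "parallel_metric ip anc G (D_tilde ip D J)"
  unfolding parallel_metric_def Gmet_def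
proof (intro allI)
  fix u v w
  have "anc u (ip (G v) w) = ip (G (D u v)) w + ip (G v) (D u w)"
    by (simp add: anc_ip D_G_right)
  moreover have "ip (G (kaehler_correction u v)) w = ip (kaehler_correction u (G v)) w"
    by (simp add: ip_G ip_kaehler_correction_G)
  moreover have "ip (G v) (kaehler_correction u w) = - ip (kaehler_correction u (G v)) w"
    by (metis ip_sym ip_kaehler_correction_skew)
  ultimately show "anc u (ip (G v) w)
      = ip (G (D_tilde ip D J u v)) w + ip (G v) (D_tilde ip D J u w)"
    by (simp add: D_tilde_eq G_simps ip_simps algebra_simps)
qed

lemma parallel_end_D_tilde: "parallel_end (D_tilde ip D J) J"
  unfolding parallel_end_def
proof (intro allI)
  fix u v
  have "covD_end (D_tilde ip D J) J u v
      = DJ u v + (kaehler_correction u (J v) - J (kaehler_correction u v))"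
    unfolding covD_end_def D_tilde_eq by (simp add: J_simps algebra_simps)
  then show "covD_end (D_tilde ip D J) J u v = 0"
    by (simp add: kaehler_correction_J_commutator)
qed

end

theorem theorem5p4:
  fixes sm :: "'f::{comm_ring_1,real_algebra_1} \<Rightarrow> 'e::real_vector \<Rightarrow> 'e"
    and ip :: "'e \<Rightarrow> 'e \<Rightarrow> 'f" and br :: "'e \<Rightarrow> 'e \<Rightarrow> 'e" and anc :: "'e \<Rightarrow> 'f \<Rightarrow> 'f"
    and Gend J :: "'e \<Rightarrow> 'e" and D :: "'e \<Rightarrow> 'e \<Rightarrow> 'e"
  assumes "courant_algebroid sm ip br anc"
    and "gen_kaehler sm ip br Gend J"
    and "levi_civita sm ip br anc Gend D"
  shows "gen_connection sm ip anc (D_tilde ip D J)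
       \<and> torsion_free ip br (D_tilde ip D J)
       \<and> parallel_metric ip anc Gend (D_tilde ip D J)
       \<and> parallel_end (D_tilde ip D J) J"
proof -
  interpret gk_levi_civita sm ip br anc Gend J D
    using assms by unfold_locales
  show ?thesis
    unfolding torsion_free_def
    using gen_connection_D_tilde torsion_D_tilde parallel_metric_D_tilde parallel_end_D_tilde
    by blast
qed

end
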